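(* Let $T\in\mathcal{L}(\mathcal{H})$ have closed range and let $n\ge1$. The following are equivalent: (1) $T$ is $n$-hypo-EP; (2) $T^n=T^\dagger T^{n+1}$; (3) $T^nT^\dagger=T^\dagger T^{n+1}T^\dagger$; (4) $(T^* )^n=(T^* )^nT^\dagger T$; (5) there is $c\ge0$ with $\|(T^* )^nx\|\le c\|Tx\|$ for all $x\in\mathcal{H}$; (6) there is $c\ge0$ with $\|(T^* )^nx\|\le c\|\omega(T)x\|$ for all $x\in\mathcal{H}$.
   Context: $\mathcal{H}$ is a Hilbert space, $\mathcal{L}(\mathcal{H})$ the bounded operators on it; $R(\cdot)$ denotes range. For $T$ with closed range, $T^\dagger$ is its Moore–Penrose inverse (unique solution of $TT^\dagger T=T$, $T^\dagger TT^\dagger=T^\dagger$, $(T^\dagger T)^*=T^\dagger T$, $(TT^\dagger)^*=TT^\dagger$), and $\omega(T)=T(T^*T)^\dagger=(T^\dagger)^*$ is its Cauchy dual. For $n\ge1$, $T$ is $n$-hypo-EP if $T$ has closed range and $R(T^n)\subset R(T^* )$. *)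

theory Defs
  imports "HOL-Analysis.Analysis"
begin

text \<open>Bounded operators on a (real) Hilbert space 'a, i.e. 'a::{real_inner, complete_space}.\<close>

definition op_pow :: "('a::real_normed_vector \<Rightarrow>\<^sub>L 'a) \<Rightarrow> nat \<Rightarrow> ('a \<Rightarrow>\<^sub>L 'a)" where
  "op_pow T n = ((\<lambda>S. T o\<^sub>L S) ^^ n) id_blinfun"

definition adj :: "('a::{real_inner,complete_space} \<Rightarrow>\<^sub>L 'a) \<Rightarrow> ('a \<Rightarrow>\<^sub>L 'a)" where
  "adj T = (THE S::'a \<Rightarrow>\<^sub>L 'a. \<forall>x y. inner (T x) y = inner x (S y))"

definition closed_range :: "('a::real_normed_vector \<Rightarrow>\<^sub>L 'a) \<Rightarrow> bool" where
  "closed_range T \<longleftrightarrow> closed (range (blinfun_apply T))"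

definition mp_inv :: "('a::{real_inner,complete_space} \<Rightarrow>\<^sub>L 'a) \<Rightarrow> ('a \<Rightarrow>\<^sub>L 'a)" where
  "mp_inv T = (THE S::'a \<Rightarrow>\<^sub>L 'a. T o\<^sub>L S o\<^sub>L T = T \<and> S o\<^sub>L T o\<^sub>L S = S
                 \<and> adj (S o\<^sub>L T) = S o\<^sub>L T \<and> adj (T o\<^sub>L S) = T o\<^sub>L S)"

text \<open>Cauchy dual omega(T) = T (T* T)^dagger.\<close>
definition cauchy_dual :: "('a::{real_inner,complete_space} \<Rightarrow>\<^sub>L 'a) \<Rightarrow> ('a \<Rightarrow>\<^sub>L 'a)" where
  "cauchy_dual T = T o\<^sub>L mp_inv (adj T o\<^sub>L T)"

definition hypo_EP :: "nat \<Rightarrow> ('a::{real_inner,complete_space} \<Rightarrow>\<^sub>L 'a) \<Rightarrow> bool" where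
  "hypo_EP n T \<longleftrightarrow> closed_range T \<and> range (blinfun_apply (op_pow T n)) \<subseteq> range (blinfun_apply (adj T))"

end

theory Submission
  imports Defs
begin

text \<open>
  Closed range makes the Moore-Penrose inverse T^+ available: by Baire's theorem T has preimages
  of norm O(|y|) on its range, and combining them with the orthogonal projections onto R(T) and
  ker T gives a bounded T^+ with T T^+ = P_R(T) and T^+ T = I - P_(ker T). So T^+ T is the
  projection onto (ker T)^perp = R(T*), and R(T^n) <= R(T*) says exactly that T^+ T fixes T^n,
  i.e. T^n = T^+ T^(n+1), which is (2). Composing with T^+ T turns (3) into (2); taking adjoints
  turns (2) into (4); (4) factors (T*)^n through T, giving (5); and (5) forces
  ker T <= ker (T*)^n, i.e. R(T^n) is orthogonal to ker T, which is (2) again. Finally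
  omega(T) = (T^+)* has the same kernel as T and T^+ T = T* omega(T), which gives (6).
\<close>

section \<open>Orthogonal projections\<close>

lemma parallelogram_law:
  fixes a b :: "'a::real_inner"
  shows "(norm (a + b))\<^sup>2 + (norm (a - b))\<^sup>2 = 2 * (norm a)\<^sup>2 + 2 * (norm b)\<^sup>2"
  by (simp add: power2_norm_eq_inner inner_add_left inner_add_right inner_diff_left inner_diff_right
      inner_commute)

lemma Cauchy_if_dist_sq_le:
  fixes s :: "nat \<Rightarrow> 'a::metric_space"
  assumes bound: "\<And>m n. (dist (s m) (s n))\<^sup>2 \<le> \<delta> m + \<delta> n" and lim: "\<delta> \<longlonglongrightarrow> 0"
  shows "Cauchy s"
proof (rule metric_CauchyI)
  fix e :: real assume "e > 0"
  then have "\<forall>\<^sub>F n in sequentially. \<delta> n < e\<^sup>2 / 2"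
    using lim by (intro order_tendstoD(2)) auto
  then obtain N where N: "\<And>n. n \<ge> N \<Longrightarrow> \<delta> n < e\<^sup>2 / 2"
    unfolding eventually_sequentially by blast
  have "dist (s m) (s n) < e" if "m \<ge> N" "n \<ge> N" for m n
  proof -
    have "(dist (s m) (s n))\<^sup>2 < e\<^sup>2" using bound[of m n] N[OF that(1)] N[OF that(2)] by linarith
    then show ?thesis using \<open>e > 0\<close> by (simp add: power_less_imp_less_base)
  qed
  then show "\<exists>N. \<forall>m\<ge>N. \<forall>n\<ge>N. dist (s m) (s n) < e" by blast
qed

lemma convex_minimizing_sequence_Cauchy:
  fixes M :: "'a::real_inner set"
  assumes "convex M" and s_in: "\<And>k. s k \<in> M" and lim: "(\<lambda>k. dist x (s k)) \<longlonglongrightarrow> infdist x M"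
  shows "Cauchy s"
proof -
  define d where "d = infdist x M"
  define \<delta> where "\<delta> k = 2 * ((dist x (s k))\<^sup>2 - d\<^sup>2)" for k
  have "\<delta> \<longlonglongrightarrow> 2 * (d\<^sup>2 - d\<^sup>2)"
    unfolding \<delta>_def d_def by (intro tendsto_intros lim)
  then have "\<delta> \<longlonglongrightarrow> 0" by simp
  moreover have "(dist (s a) (s b))\<^sup>2 \<le> \<delta> a + \<delta> b" for a b
  proof -
    have "midpoint (s a) (s b) \<in> M"
      using convexD[OF assms(1) s_in s_in, of "1/2" "1/2"] by (simp add: midpoint_def scaleR_add_right)
    then have "d\<^sup>2 \<le> (dist x (midpoint (s a) (s b)))\<^sup>2"
      by (simp add: power_mono d_def infdist_nonneg infdist_le)
    moreover have "(x - s a) + (x - s b) = 2 *\<^sub>R (x - midpoint (s a) (s b))"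
      unfolding midpoint_def scaleR_diff_right scaleR_scaleR by (simp add: scaleR_2)
    then have "4 * (dist x (midpoint (s a) (s b)))\<^sup>2 + (dist (s a) (s b))\<^sup>2
        = 2 * (dist x (s a))\<^sup>2 + 2 * (dist x (s b))\<^sup>2"
      using parallelogram_law[of "x - s a" "x - s b"]
      by (simp add: dist_norm norm_minus_commute power_mult_distrib)
    ultimately show ?thesis unfolding \<delta>_def by argo
  qed
  ultimately show ?thesis by (intro Cauchy_if_dist_sq_le)
qed

lemma closed_convex_distance_attains_inf:
  fixes M :: "'a::{real_inner,complete_space} set"
  assumes "closed M" "convex M" "M \<noteq> {}"
  shows "\<exists>m\<in>M. \<forall>u\<in>M. dist x m \<le> dist x u"
proof -
  have "\<exists>m\<in>M. dist x m < infdist x M + 1 / Suc k" for k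
  proof -
    have "(INF u\<in>M. dist x u) < infdist x M + 1 / Suc k" using assms(3) by (simp add: infdist_notempty)
    then show ?thesis using assms(3) by (subst (asm) cINF_less_iff) auto
  qed
  then obtain s where s_in: "\<And>k. s k \<in> M" and s_close: "\<And>k. dist x (s k) < infdist x M + 1 / Suc k"
    by metis
  have lower: "\<forall>k. infdist x M \<le> dist x (s k)"
    and upper: "\<forall>k. dist x (s k) \<le> infdist x M + 1 / Suc k"
    using s_in s_close infdist_le less_imp_le by blast+
  from tendsto_add[OF tendsto_const LIMSEQ_Suc[OF lim_1_over_n]]
  have "(\<lambda>k. infdist x M + 1 / Suc k) \<longlonglongrightarrow> infdist x M" by simp
  with lower upper have dist_lim: "(\<lambda>k. dist x (s k)) \<longlonglongrightarrow> infdist x M"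
    by (rule tendsto_sandwich[OF always_eventually always_eventually tendsto_const])
  with assms(2) s_in have "Cauchy s" by (rule convex_minimizing_sequence_Cauchy)
  then obtain m where lim: "s \<longlonglongrightarrow> m" using convergent_eq_Cauchy by blast
  have "dist x m = infdist x M"
    using tendsto_dist[OF tendsto_const lim] dist_lim by (rule LIMSEQ_unique)
  moreover have "m \<in> M" using assms(1) s_in lim closed_sequentially by blast
  ultimately show ?thesis by (metis infdist_le)
qed

lemma orthogonal_projection_exists:
  fixes M :: "'a::{real_inner,complete_space} set"
  assumes "subspace M" "closed M"
  shows "\<exists>m\<in>M. \<forall>u\<in>M. inner (x - m) u = 0"
proof -
  have convex: "convex M" using assms(1) by (rule subspace_imp_convex)
  obtain m where m: "m \<in> M" and nearest: "\<forall>u\<in>M. dist x m \<le> dist x u"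
    using closed_convex_distance_attains_inf[OF assms(2) convex] subspace_0[OF assms(1)] by blast
  have "inner (x - m) u = 0" if u: "u \<in> M" for u
  proof -
    have "inner (x - m) ((m + v) - m) \<le> 0" if "v \<in> M" for v
      using any_closest_point_dot[OF convex assms(2) m _ nearest] subspace_add[OF assms(1) m that]
      by blast
    from this[OF u] this[OF subspace_neg[OF assms(1) u]] show ?thesis by simp
  qed
  then show ?thesis using m by blast
qed

definition orth_proj :: "'a::real_inner set \<Rightarrow> 'a \<Rightarrow> 'a" where
  "orth_proj M x = (SOME m. m \<in> M \<and> (\<forall>u\<in>M. inner (x - m) u = 0))"

locale closed_subspace =
  fixes M :: "'a::{real_inner,complete_space} set"
  assumes subspace_M: "subspace M" and closed_M: "closed M"
begin

lemma orth_proj_in: "orth_proj M x \<in> M"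
  and orth_proj_orthogonal: "u \<in> M \<Longrightarrow> inner (x - orth_proj M x) u = 0"
  using someI_ex[OF orthogonal_projection_exists[OF subspace_M closed_M, of x, unfolded Bex_def]]
  unfolding orth_proj_def by blast+

lemma orth_proj_unique:
  assumes "m \<in> M" "\<And>u. u \<in> M \<Longrightarrow> inner (x - m) u = 0"
  shows "orth_proj M x = m"
proof -
  have diff_in: "orth_proj M x - m \<in> M"
    using subspace_diff[OF subspace_M orth_proj_in assms(1)] .
  have "inner (orth_proj M x - m) (orth_proj M x - m)
      = inner (x - m) (orth_proj M x - m) - inner (x - orth_proj M x) (orth_proj M x - m)"
    by (simp add: inner_diff_left)
  also have "\<dots> = 0" using assms(2)[OF diff_in] orth_proj_orthogonal[OF diff_in] by simp
  finally show ?thesis by simp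
qed

lemma orth_proj_id: "x \<in> M \<Longrightarrow> orth_proj M x = x"
  by (rule orth_proj_unique) auto

lemma orth_proj_Pythagorean: "(norm x)\<^sup>2 = (norm (x - orth_proj M x))\<^sup>2 + (norm (orth_proj M x))\<^sup>2"
  using norm_add_Pythagorean[of "x - orth_proj M x" "orth_proj M x"]
  by (simp add: orthogonal_def orth_proj_orthogonal[OF orth_proj_in])

lemma norm_orth_proj_le: "norm (orth_proj M x) \<le> norm x"
  and norm_orth_proj_compl_le: "norm (x - orth_proj M x) \<le> norm x"
  using orth_proj_Pythagorean[of x] by (auto intro: power2_le_imp_le)

lemma orth_proj_self_adjoint: "inner (orth_proj M x) y = inner x (orth_proj M y)"
proof -
  have "inner (orth_proj M x) (y - orth_proj M y) = 0" "inner (x - orth_proj M x) (orth_proj M y) = 0"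
    using orth_proj_orthogonal[OF orth_proj_in] by (auto simp: inner_commute)
  then show ?thesis by (simp add: inner_diff_left inner_diff_right)
qed

lemma bounded_linear_orth_proj: "bounded_linear (orth_proj M)"
proof
  fix x y show "orth_proj M (x + y) = orth_proj M x + orth_proj M y"
    using orth_proj_orthogonal[of _ x] orth_proj_orthogonal[of _ y]
    by (intro orth_proj_unique subspace_add[OF subspace_M] orth_proj_in)
       (simp add: algebra_simps inner_diff_left inner_add_left)
next
  fix c x show "orth_proj M (c *\<^sub>R x) = c *\<^sub>R orth_proj M x"
    using orth_proj_orthogonal[of _ x]
    by (intro orth_proj_unique subspace_scale[OF subspace_M] orth_proj_in)
       (simp add: inner_diff_left flip: scaleR_diff_right)
next
  show "\<exists>K. \<forall>x. norm (orth_proj M x) \<le> norm x * K"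
    using norm_orth_proj_le by (intro exI[of _ 1]) simp
qed

end

lemma closed_subspace_kernel:
  fixes f :: "'a::{real_inner,complete_space} \<Rightarrow> 'b::real_normed_vector"
  assumes "bounded_linear f"
  shows "closed_subspace {x. f x = 0}"
proof
  interpret f: bounded_linear f by fact
  show "subspace {x. f x = 0}" by (rule linear_subspace_kernel) (rule f.linear)
  show "closed {x. f x = 0}" by (intro closed_Collect_eq continuous_on_const f.continuous_on continuous_on_id)
qed

section \<open>Adjoints\<close>

lemma riesz_representation:
  fixes f :: "'a::{real_inner,complete_space} \<Rightarrow> real"
  assumes "bounded_linear f"
  shows "\<exists>y. \<forall>x. f x = inner x y"
proof (cases "\<forall>x. f x = 0")
  case True
  then show ?thesis by (intro exI[of _ 0]) simp
next
  case False
  then obtain z where "f z \<noteq> 0" by blast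
  interpret f: bounded_linear f by fact
  interpret K: closed_subspace "{x. f x = 0}" using assms by (rule closed_subspace_kernel)
  define w where "w = z - orth_proj {x. f x = 0} z"
  have fw: "f w \<noteq> 0" using \<open>f z \<noteq> 0\<close> K.orth_proj_in[of z] by (simp add: w_def f.diff)
  have w_orthogonal: "inner w u = 0" if "f u = 0" for u
    unfolding w_def using K.orth_proj_orthogonal that by simp
  have "inner x w = f x / f w * inner w w" for x
  proof -
    have "inner w (x - (f x / f w) *\<^sub>R w) = 0"
      using fw by (intro w_orthogonal) (simp add: f.diff f.scale)
    then show ?thesis by (simp add: inner_diff_right inner_commute)
  qed
  then have "f x = inner x ((f w / inner w w) *\<^sub>R w)" for x
    using fw by (auto simp: field_simps)
  then show ?thesis by blast
qed

lemma adj_exists: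
  fixes T :: "'a::{real_inner,complete_space} \<Rightarrow>\<^sub>L 'a"
  shows "\<exists>S::'a \<Rightarrow>\<^sub>L 'a. \<forall>x y. inner (T x) y = inner x (S y)"
proof -
  have "\<exists>s. \<forall>x. inner (T x) y = inner x s" for y
    by (intro riesz_representation bounded_linear_compose[OF bounded_linear_inner_left]
        blinfun.bounded_linear_right)
  then obtain S where S: "\<And>x y. inner (T x) y = inner x (S y)" by metis
  have S_eqI: "S y = s" if "\<And>x. inner (T x) y = inner x s" for y s
    using that S by (metis vector_eq_ldot)
  have "linear S"
    by standard (rule S_eqI; simp add: S inner_add_right blinfun.bilinear_simps)+
  moreover have "norm (S y) \<le> norm y * norm T" for y
  proof -
    have "(norm (S y))\<^sup>2 = inner (T (S y)) y" by (simp add: S power2_norm_eq_inner)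
    also have "\<dots> \<le> norm T * norm (S y) * norm y"
      by (metis Cauchy_Schwarz_ineq2 abs_le_D1 mult_right_mono norm_blinfun norm_ge_zero order_trans)
    finally show ?thesis
      by (cases "S y = 0") (auto simp: power2_eq_square mult.commute mult_le_cancel_right)
  qed
  ultimately have "bounded_linear S" by (intro bounded_linear_intro) (auto simp: linear_add linear_scale)
  then show ?thesis by (intro exI[of _ "Blinfun S"]) (simp add: bounded_linear_Blinfun_apply S)
qed

lemma adj_eqI:
  fixes T S :: "'a::{real_inner,complete_space} \<Rightarrow>\<^sub>L 'a"
  assumes "\<And>x y. inner (T x) y = inner x (S y)"
  shows "adj T = S"
  unfolding adj_def
proof (rule the_equality)
  show "\<forall>x y. inner (T x) y = inner x (S y)" using assms by blast
  fix S' :: "'a \<Rightarrow>\<^sub>L 'a" assume "\<forall>x y. inner (T x) y = inner x (S' y)"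
  then show "S' = S" using assms by (metis blinfun_eqI vector_eq_ldot)
qed

lemma adj_inner: "inner (T x) y = inner x (adj T y)"
  for T :: "'a::{real_inner,complete_space} \<Rightarrow>\<^sub>L 'a"
  using adj_exists[of T] adj_eqI by metis

lemma adj_inner_left: "inner (adj T x) y = inner x (T y)"
  for T :: "'a::{real_inner,complete_space} \<Rightarrow>\<^sub>L 'a"
  by (metis adj_inner inner_commute)

lemma adj_adj [simp]: "adj (adj T) = T"
  for T :: "'a::{real_inner,complete_space} \<Rightarrow>\<^sub>L 'a"
  by (rule adj_eqI) (simp add: adj_inner_left)

lemma adj_eq_iff: "adj S = adj T \<longleftrightarrow> S = T"
  for S T :: "'a::{real_inner,complete_space} \<Rightarrow>\<^sub>L 'a"
  by (metis adj_adj)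

lemma adj_compose: "adj (S o\<^sub>L T) = adj T o\<^sub>L adj S"
  for S T :: "'a::{real_inner,complete_space} \<Rightarrow>\<^sub>L 'a"
  by (rule adj_eqI) (simp add: adj_inner)

lemma adj_id [simp]: "adj (id_blinfun :: 'a::{real_inner,complete_space} \<Rightarrow>\<^sub>L 'a) = id_blinfun"
  by (rule adj_eqI) simp

lemma blinfun_compose_assoc: "(R o\<^sub>L S) o\<^sub>L T = R o\<^sub>L (S o\<^sub>L T)"
  by (rule blinfun_eqI) simp

lemma op_pow_0: "op_pow T 0 = id_blinfun"
  by (simp add: op_pow_def)

lemma op_pow_Suc: "op_pow T (Suc n) = T o\<^sub>L op_pow T n"
  by (simp add: op_pow_def)

lemma op_pow_Suc_right: "op_pow T (Suc n) = op_pow T n o\<^sub>L T"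
proof (induction n)
  case 0
  show ?case by (rule blinfun_eqI) (simp add: op_pow_0 op_pow_Suc)
next
  case (Suc n)
  have "op_pow T (Suc (Suc n)) = T o\<^sub>L (op_pow T n o\<^sub>L T)" by (simp only: op_pow_Suc[of T "Suc n"] Suc.IH)
  then show ?case by (simp add: op_pow_Suc blinfun_compose_assoc)
qed

lemma adj_op_pow: "adj (op_pow T n) = op_pow (adj T) n"
  for T :: "'a::{real_inner,complete_space} \<Rightarrow>\<^sub>L 'a"
proof (induction n)
  case 0
  show ?case by (simp add: op_pow_0)
next
  case (Suc n)
  have "adj (op_pow T (Suc n)) = adj (op_pow T n) o\<^sub>L adj T" by (simp add: op_pow_Suc adj_compose)
  then show ?case by (simp add: Suc.IH op_pow_Suc_right)
qed

section \<open>Bounded preimages on a closed range\<close>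

lemma summable_norm_cancel_complete:
  fixes f :: "nat \<Rightarrow> 'a::{real_normed_vector,complete_space}"
  assumes "summable (\<lambda>n. norm (f n))"
  shows "summable f"
  unfolding summable_iff_convergent Cauchy_convergent_iff[symmetric] Cauchy_iff
proof (intro allI impI)
  fix e :: real assume "e > 0"
  then obtain N where N: "\<And>m n. m \<ge> N \<Longrightarrow> norm (\<Sum>k=m..<n. norm (f k)) < e"
    using assms unfolding summable_Cauchy by blast
  have "norm (sum f {..<m} - sum f {..<n}) < e" if "n \<le> m" "n \<ge> N" for m n
  proof -
    have "sum f {..<m} - sum f {..<n} = sum f {n..<m}"
      using that(1) by (simp add: sum_diff_nat_ivl atLeast0LessThan[symmetric])
    then have "norm (sum f {..<m} - sum f {..<n}) \<le> (\<Sum>k=n..<m. norm (f k))"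
      by (simp add: norm_sum)
    then show ?thesis using N[OF that(2), of m] by simp
  qed
  then show "\<exists>M. \<forall>m\<ge>M. \<forall>n\<ge>M. norm (sum f {..<m} - sum f {..<n}) < e"
    by (metis nle_le norm_minus_commute)
qed

lemma summable_norm_complete:
  fixes f :: "nat \<Rightarrow> 'a::{real_normed_vector,complete_space}"
  assumes "summable (\<lambda>n. norm (f n))"
  shows "norm (suminf f) \<le> (\<Sum>n. norm (f n))"
proof (rule LIMSEQ_le)
  show "(\<lambda>n. norm (\<Sum>k<n. f k)) \<longlonglongrightarrow> norm (suminf f)"
    using summable_LIMSEQ[OF summable_norm_cancel_complete[OF assms]] by (rule tendsto_norm)
  show "(\<lambda>n. \<Sum>k<n. norm (f k)) \<longlonglongrightarrow> (\<Sum>n. norm (f n))"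
    by (rule summable_LIMSEQ[OF assms])
qed (intro exI allI impI norm_sum)

lemma approximate_preimages_iterate:
  fixes T :: "'a::real_normed_vector \<Rightarrow>\<^sub>L 'b::real_normed_vector"
  assumes "K \<ge> 0"
    and approx: "\<And>z. z \<in> range T \<Longrightarrow> \<exists>x. norm x \<le> K * norm z \<and> norm (z - T x) \<le> norm z / 2"
    and "y \<in> range T"
  obtains xs where "\<And>k. norm (xs k) \<le> K * norm y * (1/2) ^ k"
    and "\<And>m. norm (y - (\<Sum>k<m. T (xs k))) \<le> norm y * (1/2) ^ m"
proof -
  obtain f where f: "\<And>z. z \<in> range T \<Longrightarrow> norm (f z) \<le> K * norm z \<and> norm (z - T (f z)) \<le> norm z / 2"
    using approx by metis
  define r where "r = rec_nat y (\<lambda>_ z. z - T (f z))"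
  have r_0: "r 0 = y" and r_Suc: "r (Suc k) = r k - T (f (r k))" for k
    by (simp_all add: r_def)
  have r_range: "r k \<in> range T" for k
  proof (induction k)
    case (Suc k)
    then obtain u where "r k = T u" by blast
    then have "r (Suc k) = T (u - f (r k))" by (simp add: r_Suc blinfun.diff_right)
    then show ?case by simp
  qed (simp add: r_0 \<open>y \<in> range T\<close>)
  have r_norm: "norm (r k) \<le> norm y * (1/2) ^ k" for k
  proof (induction k)
    case (Suc k)
    have "norm (r (Suc k)) \<le> norm (r k) / 2" using f[OF r_range[of k]] by (simp add: r_Suc)
    then show ?case using Suc.IH by simp
  qed (simp add: r_0)
  show ?thesis
  proof
    fix k
    have "norm (f (r k)) \<le> K * norm (r k)" using f[OF r_range] by blast
    also have "\<dots> \<le> K * (norm y * (1/2) ^ k)" using r_norm \<open>K \<ge> 0\<close> by (rule mult_left_mono)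
    finally show "norm (f (r k)) \<le> K * norm y * (1/2) ^ k" by (simp add: mult.assoc)
  next
    fix m
    have "y - (\<Sum>k<m. T (f (r k))) = r m" by (induction m) (simp_all add: r_0 r_Suc)
    then show "norm (y - (\<Sum>k<m. T (f (r k)))) \<le> norm y * (1/2) ^ m" using r_norm by simp
  qed
qed

lemma preimage_from_approximate_preimages:
  fixes T :: "'a::{real_normed_vector,complete_space} \<Rightarrow>\<^sub>L 'b::real_normed_vector"
  assumes "K \<ge> 0"
    and "\<And>z. z \<in> range T \<Longrightarrow> \<exists>x. norm x \<le> K * norm z \<and> norm (z - T x) \<le> norm z / 2"
    and "y \<in> range T"
  shows "\<exists>x. T x = y \<and> norm x \<le> 2 * K * norm y"
proof -
  obtain xs where xs_norm: "\<And>k. norm (xs k) \<le> K * norm y * (1/2) ^ k"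
    and residual: "\<And>m. norm (y - (\<Sum>k<m. T (xs k))) \<le> norm y * (1/2) ^ m"
    using approximate_preimages_iterate[OF assms] by blast
  have geometric: "summable (\<lambda>k. K * norm y * (1/2::real) ^ k)"
    by (intro summable_mult summable_geometric) simp
  have norm_summable: "summable (\<lambda>k. norm (xs k))"
    by (rule summable_comparison_test[OF _ geometric]) (use xs_norm in auto)
  define x where "x = suminf xs"
  have "(\<lambda>k. T (xs k)) sums T x"
    unfolding x_def using summable_sums[OF summable_norm_cancel_complete[OF norm_summable]]
    by (rule bounded_linear.sums[OF blinfun.bounded_linear_right])
  moreover have "(\<lambda>k. T (xs k)) sums y"
  proof -
    have "(\<lambda>m. y - (\<Sum>k<m. T (xs k))) \<longlonglongrightarrow> 0"
    proof (rule Lim_null_comparison)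
      show "\<forall>\<^sub>F m in sequentially. norm (y - (\<Sum>k<m. T (xs k))) \<le> norm y * (1/2) ^ m"
        using residual by (simp add: always_eventually)
      show "(\<lambda>m. norm y * (1/2::real) ^ m) \<longlonglongrightarrow> 0"
        by (intro tendsto_mult_right_zero LIMSEQ_power_zero) simp
    qed
    from tendsto_diff[OF tendsto_const this, of y] show ?thesis by (simp add: sums_def)
  qed
  ultimately have "T x = y" by (rule sums_unique2)
  have "norm x \<le> (\<Sum>k. norm (xs k))"
    unfolding x_def using norm_summable by (rule summable_norm_complete)
  also have "\<dots> \<le> (\<Sum>k. K * norm y * (1/2::real) ^ k)"
    using xs_norm norm_summable geometric by (rule suminf_le)
  also have "\<dots> = 2 * K * norm y"
    by (simp add: suminf_mult suminf_geometric)
  finally show ?thesis using \<open>T x = y\<close> by blast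
qed

lemma closed_range_Baire:
  fixes T :: "'a::real_normed_vector \<Rightarrow>\<^sub>L 'b::{real_normed_vector,complete_space}"
  assumes "closed (range T)"
  obtains N y0 r where "N > 0" "r > 0" "y0 \<in> range T"
    and "range T \<inter> ball y0 r \<subseteq> closure (T ` ball 0 N)"
proof -
  define R where "R = range (blinfun_apply T)"
  define F where "F k = closure (T ` ball 0 (real (Suc k)))" for k
  have F_sub: "F k \<subseteq> R" for k
    unfolding F_def R_def using assms by (intro closure_minimal) auto
  have "R \<subseteq> \<Union>(range F)"
  proof
    fix y assume "y \<in> R"
    then obtain x where "y = T x" unfolding R_def by blast
    moreover obtain k where "norm x < real (Suc k)"
      using reals_Archimedean2[of "norm x"] by (meson less_Suc_eq of_nat_less_iff order.strict_trans)
    ultimately show "y \<in> \<Union>(range F)" unfolding F_def using closure_subset by fastforce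
  qed
  then have R_eq: "\<Union>(range F) = R" using F_sub by blast
  have "\<exists>k. top_of_set R interior_of F k \<noteq> {}"
  proof (rule ccontr)
    assume "\<not> ?thesis"
    moreover have "closedin (top_of_set R) (F k)" for k
      by (rule closed_subset[OF F_sub]) (simp add: F_def)
    moreover have "completely_metrizable_space (top_of_set R)"
      by (rule completely_metrizable_space_closedin[OF completely_metrizable_space_euclidean])
        (use assms closed_closedin in \<open>auto simp: R_def\<close>)
    ultimately have "top_of_set R interior_of \<Union>(range F) = {}"
      by (intro Baire_category_alt) auto
    moreover have "0 \<in> R" using rangeI[of "blinfun_apply T" 0] by (simp add: R_def)
    ultimately show False using interior_of_topspace[of "top_of_set R"] by (simp add: R_eq)
  qed
  then obtain k y0 where "y0 \<in> top_of_set R interior_of F k" by blast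
  then obtain V where V: "openin (top_of_set R) V" "y0 \<in> V" "V \<subseteq> F k"
    unfolding interior_of_def by blast
  then obtain W where W: "open W" "V = R \<inter> W" unfolding openin_open by blast
  then obtain r where "r > 0" "ball y0 r \<subseteq> W" using V(2) open_contains_ball_eq by blast
  then show ?thesis
    using that[of "real (Suc k)" r y0] V W by (fastforce simp: F_def R_def)
qed

lemma subspace_range_blinfun: "subspace (range (blinfun_apply T))"
  by (rule linear_subspace_image[OF bounded_linear.linear[OF blinfun.bounded_linear_right] subspace_UNIV])

lemma closed_range_approximate_preimages_near_0:
  fixes T :: "'a::real_normed_vector \<Rightarrow>\<^sub>L 'b::{real_normed_vector,complete_space}"
  assumes "closed (range T)"
  obtains N r where "N > 0" "r > 0"
    and "\<And>z e. z \<in> range T \<Longrightarrow> norm z < r \<Longrightarrow> e > 0 \<Longrightarrow> \<exists>x. norm x < N \<and> norm (z - T x) < e"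
proof -
  obtain N y0 r where "N > 0" "r > 0" "y0 \<in> range T"
    and near: "range T \<inter> ball y0 r \<subseteq> closure (T ` ball 0 N)"
    by (rule closed_range_Baire[OF assms])
  have "\<exists>x. norm x < 2 * N \<and> norm (z - T x) < e"
    if "z \<in> range T" "norm z < r" "e > 0" for z e
  proof -
    have "y0 + z \<in> range T"
      using subspace_add[OF subspace_range_blinfun \<open>y0 \<in> range T\<close> \<open>z \<in> range T\<close>] .
    then have "y0 + z \<in> range T \<inter> ball y0 r" "y0 \<in> range T \<inter> ball y0 r"
      using \<open>y0 \<in> range T\<close> \<open>r > 0\<close> \<open>norm z < r\<close> by (simp_all add: dist_norm)
    then have "y0 + z \<in> closure (T ` ball 0 N)" "y0 \<in> closure (T ` ball 0 N)"
      using near by blast+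
    moreover have "e / 2 > 0" using \<open>e > 0\<close> by simp
    ultimately obtain w1 w2 where "w1 \<in> T ` ball 0 N" "dist w1 (y0 + z) < e / 2"
      and "w2 \<in> T ` ball 0 N" "dist w2 y0 < e / 2"
      unfolding closure_approachable by blast
    then obtain x1 x2 where x1: "norm x1 < N" "dist (T x1) (y0 + z) < e / 2"
      and x2: "norm x2 < N" "dist (T x2) y0 < e / 2"
      by auto
    have "norm (x1 - x2) < 2 * N"
      using norm_triangle_ineq4[of x1 x2] x1(1) x2(1) by linarith
    moreover have "z - T (x1 - x2) = (y0 + z - T x1) - (y0 - T x2)"
      by (simp add: blinfun.diff_right algebra_simps)
    then have "norm (z - T (x1 - x2)) \<le> norm (y0 + z - T x1) + norm (y0 - T x2)"
      by (metis norm_triangle_ineq4)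
    then have "norm (z - T (x1 - x2)) < e"
      using x1(2) x2(2) by (simp add: dist_norm norm_minus_commute)
    ultimately show ?thesis by blast
  qed
  moreover have "2 * N > 0" using \<open>N > 0\<close> by simp
  ultimately show ?thesis using that \<open>r > 0\<close> by blast
qed

lemma closed_range_approximate_preimages:
  fixes T :: "'a::real_normed_vector \<Rightarrow>\<^sub>L 'b::{real_normed_vector,complete_space}"
  assumes "closed (range T)"
  obtains K where "K \<ge> 0"
    and "\<And>y e. y \<in> range T \<Longrightarrow> e > 0 \<Longrightarrow> \<exists>x. norm x \<le> K * norm y \<and> norm (y - T x) < e"
proof -
  obtain N r where "N > 0" "r > 0"
    and small: "\<And>z e. z \<in> range T \<Longrightarrow> norm z < r \<Longrightarrow> e > 0 \<Longrightarrow> \<exists>x. norm x < N \<and> norm (z - T x) < e"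
    using closed_range_approximate_preimages_near_0[OF assms] by blast
  define K where "K = 2 * N / r"
  show ?thesis
  proof
    show "K \<ge> 0" using \<open>N > 0\<close> \<open>r > 0\<close> by (simp add: K_def)
  next
    fix y e assume y: "y \<in> range T" and "(e::real) > 0"
    show "\<exists>x. norm x \<le> K * norm y \<and> norm (y - T x) < e"
    proof (cases "y = 0")
      case True
      then show ?thesis using \<open>e > 0\<close> by (intro exI[of _ 0]) simp
    next
      case False
      define c where "c = r / (2 * norm y)"
      have "c > 0" using False \<open>r > 0\<close> by (simp add: c_def)
      have "c *\<^sub>R y \<in> range T" using subspace_scale[OF subspace_range_blinfun y] .
      moreover have "norm (c *\<^sub>R y) < r" using False \<open>r > 0\<close> by (simp add: c_def)
      ultimately obtain x where x: "norm x < N" "norm (c *\<^sub>R y - T x) < c * e"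
        using small \<open>c > 0\<close> \<open>e > 0\<close> by (meson mult_pos_pos)
      have x_bound: "norm (x /\<^sub>R c) \<le> K * norm y"
        using x(1) \<open>c > 0\<close> False \<open>r > 0\<close> by (simp add: K_def c_def field_simps)
      have "y - T (x /\<^sub>R c) = (c *\<^sub>R y - T x) /\<^sub>R c"
        using \<open>c > 0\<close> by (simp add: blinfun.scaleR_right algebra_simps)
      then have "norm (y - T (x /\<^sub>R c)) = norm (c *\<^sub>R y - T x) / c"
        using \<open>c > 0\<close> by (simp add: divide_inverse_commute)
      also have "\<dots> < e" using x(2) \<open>c > 0\<close> by (simp add: divide_less_eq mult.commute)
      finally show ?thesis using x_bound by blast
    qed
  qed
qed

lemma closed_range_bounded_preimages:
  fixes T :: "'a::{real_normed_vector,complete_space} \<Rightarrow>\<^sub>L 'b::{real_normed_vector,complete_space}"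
  assumes "closed (range T)"
  obtains C where "C \<ge> 0" "\<And>y. y \<in> range T \<Longrightarrow> \<exists>x. T x = y \<and> norm x \<le> C * norm y"
proof -
  obtain K where "K \<ge> 0"
    and approx: "\<And>y e. y \<in> range T \<Longrightarrow> e > 0 \<Longrightarrow> \<exists>x. norm x \<le> K * norm y \<and> norm (y - T x) < e"
    using closed_range_approximate_preimages[OF assms] by blast
  have halving: "\<exists>x. norm x \<le> K * norm y \<and> norm (y - T x) \<le> norm y / 2" if y: "y \<in> range T" for y
  proof (cases "y = 0")
    case True
    then show ?thesis by (intro exI[of _ 0]) simp
  next
    case False
    then obtain x where "norm x \<le> K * norm y" "norm (y - T x) < norm y / 2"
      using approx[OF y, of "norm y / 2"] by auto
    then show ?thesis by (intro exI[of _ x]) simp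
  qed
  show ?thesis
  proof
    show "2 * K \<ge> 0" using \<open>K \<ge> 0\<close> by simp
    show "\<exists>x. T x = y \<and> norm x \<le> 2 * K * norm y" if "y \<in> range T" for y
      using preimage_from_approximate_preimages[OF \<open>K \<ge> 0\<close> halving that] .
  qed
qed

section \<open>The Moore--Penrose inverse\<close>

definition penrose :: "('a::{real_inner,complete_space} \<Rightarrow>\<^sub>L 'a) \<Rightarrow> ('a \<Rightarrow>\<^sub>L 'a) \<Rightarrow> bool" where
  "penrose T X \<longleftrightarrow> T o\<^sub>L X o\<^sub>L T = T \<and> X o\<^sub>L T o\<^sub>L X = X
                 \<and> adj (X o\<^sub>L T) = X o\<^sub>L T \<and> adj (T o\<^sub>L X) = T o\<^sub>L X"

lemma penrose_unique:
  assumes "penrose T X" and "penrose T Y"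
  shows "X = Y"
proof -
  from assms have TXT: "T o\<^sub>L X o\<^sub>L T = T" and XTX: "X o\<^sub>L T o\<^sub>L X = X"
    and XT_sa: "adj (X o\<^sub>L T) = X o\<^sub>L T" and TX_sa: "adj (T o\<^sub>L X) = T o\<^sub>L X"
    and TYT: "T o\<^sub>L Y o\<^sub>L T = T" and YTY: "Y o\<^sub>L T o\<^sub>L Y = Y"
    and YT_sa: "adj (Y o\<^sub>L T) = Y o\<^sub>L T" and TY_sa: "adj (T o\<^sub>L Y) = T o\<^sub>L Y"
    by (simp_all add: penrose_def)
  have "T o\<^sub>L X = adj (T o\<^sub>L X)" by (rule TX_sa[symmetric])
  also have "\<dots> = adj X o\<^sub>L adj (T o\<^sub>L Y o\<^sub>L T)" by (simp only: TYT adj_compose)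
  also have "\<dots> = adj (T o\<^sub>L X) o\<^sub>L adj (T o\<^sub>L Y)" by (simp add: adj_compose blinfun_compose_assoc)
  also have "\<dots> = (T o\<^sub>L X o\<^sub>L T) o\<^sub>L Y" by (simp add: TX_sa TY_sa blinfun_compose_assoc)
  finally have TX_TY: "T o\<^sub>L X = T o\<^sub>L Y" by (simp add: TXT)
  have "X o\<^sub>L T = adj (X o\<^sub>L T)" by (rule XT_sa[symmetric])
  also have "\<dots> = adj (T o\<^sub>L Y o\<^sub>L T) o\<^sub>L adj X" by (simp only: TYT adj_compose)
  also have "\<dots> = adj (Y o\<^sub>L T) o\<^sub>L adj (X o\<^sub>L T)" by (simp add: adj_compose blinfun_compose_assoc)
  also have "\<dots> = Y o\<^sub>L (T o\<^sub>L X o\<^sub>L T)" by (simp add: XT_sa YT_sa blinfun_compose_assoc)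
  finally have XT_YT: "X o\<^sub>L T = Y o\<^sub>L T" by (simp add: TXT)
  have "X = (X o\<^sub>L T) o\<^sub>L X" by (simp add: XTX)
  also have "\<dots> = (Y o\<^sub>L T) o\<^sub>L Y" by (simp add: XT_YT blinfun_compose_assoc TX_TY)
  finally show ?thesis by (simp add: YTY)
qed

lemma mp_inv_eqI: "penrose T X \<Longrightarrow> mp_inv T = X"
  unfolding mp_inv_def penrose_def[symmetric] using penrose_unique by blast

lemma closed_range_orth_proj_preimages:
  fixes T :: "'a::{real_inner,complete_space} \<Rightarrow>\<^sub>L 'a"
  assumes "closed_range T"
  obtains g C where "\<And>y. T (g y) = orth_proj (range T) y" and "\<And>y. norm (g y) \<le> C * norm y"
proof -
  interpret R: closed_subspace "range T"
    using subspace_range_blinfun assms by unfold_locales (simp_all add: closed_range_def)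
  obtain C where "C \<ge> 0" and preimage: "\<And>y. y \<in> range T \<Longrightarrow> \<exists>x. T x = y \<and> norm x \<le> C * norm y"
    using closed_range_bounded_preimages assms unfolding closed_range_def by blast
  have "\<exists>x. T x = orth_proj (range T) y \<and> norm x \<le> C * norm y" for y
    using preimage[OF R.orth_proj_in, of y] R.norm_orth_proj_le[of y] \<open>C \<ge> 0\<close>
    by (meson mult_left_mono order_trans)
  then show ?thesis using that by metis
qed

lemma kernel_orthogonal_part_eq:
  fixes T :: "'a::{real_inner,complete_space} \<Rightarrow>\<^sub>L 'b::real_normed_vector"
  assumes "T x = T x'"
  shows "x - orth_proj {x. T x = 0} x = x' - orth_proj {x. T x = 0} x'"
proof -
  interpret K: closed_subspace "{x. T x = 0}"
    by (rule closed_subspace_kernel[OF blinfun.bounded_linear_right])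
  interpret PK: bounded_linear "orth_proj {x. T x = 0}" by (rule K.bounded_linear_orth_proj)
  have "orth_proj {x. T x = 0} (x - x') = x - x'"
    using assms by (intro K.orth_proj_id) (simp add: blinfun.diff_right)
  then show ?thesis by (simp add: PK.diff algebra_simps)
qed

lemma minimal_norm_solution_operator_exists:
  fixes T :: "'a::{real_inner,complete_space} \<Rightarrow>\<^sub>L 'a"
  assumes "closed_range T"
  obtains S :: "'a \<Rightarrow>\<^sub>L 'a"
  where "\<And>y. T (S y) = orth_proj (range T) y"
    and "\<And>y. orth_proj {x. T x = 0} (S y) = 0"
    and "\<And>x. S (T x) = x - orth_proj {x. T x = 0} x"
proof -
  define K where "K = {x. T x = 0}"
  define R where "R = range (blinfun_apply T)"
  interpret K: closed_subspace K
    unfolding K_def by (rule closed_subspace_kernel[OF blinfun.bounded_linear_right])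
  interpret R: closed_subspace R
    using subspace_range_blinfun assms by unfold_locales (simp_all add: R_def closed_range_def)
  interpret PK: bounded_linear "orth_proj K" by (rule K.bounded_linear_orth_proj)
  interpret PR: bounded_linear "orth_proj R" by (rule R.bounded_linear_orth_proj)
  obtain g C where g_T: "\<And>y. T (g y) = orth_proj R y" and g_norm: "\<And>y. norm (g y) \<le> C * norm y"
    using closed_range_orth_proj_preimages[OF assms] unfolding R_def by blast
  define S where "S y = g y - orth_proj K (g y)" for y
  have S_eq: "S y = x - orth_proj K x" if "T x = orth_proj R y" for x y
    using kernel_orthogonal_part_eq[of T "g y" x] that by (simp add: S_def g_T K_def)
  have "bounded_linear S"
  proof
    show "S (y1 + y2) = S y1 + S y2" for y1 y2
      by (subst S_eq[of "g y1 + g y2"]) (simp_all add: g_T blinfun.add_right PR.add PK.add S_def)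
    show "S (c *\<^sub>R y) = c *\<^sub>R S y" for c y
      by (subst S_eq[of "c *\<^sub>R g y"])
        (simp_all add: g_T blinfun.scaleR_right PR.scale PK.scale S_def scaleR_diff_right)
    have "norm (S y) \<le> norm y * C" for y
      using K.norm_orth_proj_compl_le[of "g y"] g_norm[of y] by (simp add: S_def mult.commute)
    then show "\<exists>K. \<forall>y. norm (S y) \<le> norm y * K" by blast
  qed
  then have S_apply: "blinfun_apply (Blinfun S) = S" by (rule bounded_linear_Blinfun_apply)
  show ?thesis
  proof
    show "T (Blinfun S y) = orth_proj (range T) y" for y
      using K.orth_proj_in[of "g y"] by (simp add: S_apply S_def g_T blinfun.diff_right K_def R_def)
    show "orth_proj {x. T x = 0} (Blinfun S y) = 0" for y
      using K.orth_proj_id[OF K.orth_proj_in] by (simp add: S_apply S_def PK.diff flip: K_def)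
    show "Blinfun S (T x) = x - orth_proj {x. T x = 0} x" for x
      using R.orth_proj_id[of "T x"] by (simp add: S_apply S_eq R_def K_def)
  qed
qed

lemma penrose_mp_inv:
  fixes T :: "'a::{real_inner,complete_space} \<Rightarrow>\<^sub>L 'a"
  assumes "closed_range T"
  shows "penrose T (mp_inv T)"
proof -
  obtain S :: "'a \<Rightarrow>\<^sub>L 'a" where TS: "\<And>y. T (S y) = orth_proj (range T) y"
    and PS: "\<And>y. orth_proj {x. T x = 0} (S y) = 0"
    and ST: "\<And>x. S (T x) = x - orth_proj {x. T x = 0} x"
    using minimal_norm_solution_operator_exists[OF assms] by blast
  interpret K: closed_subspace "{x. T x = 0}"
    by (rule closed_subspace_kernel[OF blinfun.bounded_linear_right])
  interpret R: closed_subspace "range T"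
    using subspace_range_blinfun assms by unfold_locales (simp_all add: closed_range_def)
  have "penrose T S"
    unfolding penrose_def
  proof (intro conjI)
    show "T o\<^sub>L S o\<^sub>L T = T" by (rule blinfun_eqI) (simp add: TS R.orth_proj_id)
    show "S o\<^sub>L T o\<^sub>L S = S" by (rule blinfun_eqI) (simp add: ST PS)
    show "adj (S o\<^sub>L T) = S o\<^sub>L T"
      by (rule adj_eqI) (simp add: ST inner_diff_left inner_diff_right K.orth_proj_self_adjoint)
    show "adj (T o\<^sub>L S) = T o\<^sub>L S"
      by (rule adj_eqI) (simp add: TS R.orth_proj_self_adjoint)
  qed
  then show ?thesis by (simp add: mp_inv_eqI)
qed

locale closed_range_operator =
  fixes T :: "'a::{real_inner,complete_space} \<Rightarrow>\<^sub>L 'a"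
  assumes closed_range_T: "closed_range T"
begin

lemma T_mp_inv_T: "T o\<^sub>L mp_inv T o\<^sub>L T = T"
  and mp_inv_T_mp_inv: "mp_inv T o\<^sub>L T o\<^sub>L mp_inv T = mp_inv T"
  and adj_mp_inv_T: "adj (mp_inv T o\<^sub>L T) = mp_inv T o\<^sub>L T"
  and adj_T_mp_inv: "adj (T o\<^sub>L mp_inv T) = T o\<^sub>L mp_inv T"
  using penrose_mp_inv[OF closed_range_T] by (simp_all add: penrose_def)

lemma T_mp_inv_T_apply [simp]: "T (mp_inv T (T x)) = T x"
  using arg_cong[OF T_mp_inv_T, of "\<lambda>S. S x"] by simp

lemma mp_inv_T_mp_inv_apply [simp]: "mp_inv T (T (mp_inv T x)) = mp_inv T x"
  using arg_cong[OF mp_inv_T_mp_inv, of "\<lambda>S. S x"] by simp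

lemma adj_T_adj_mp_inv_apply [simp]: "adj T (adj (mp_inv T) x) = mp_inv T (T x)"
  using arg_cong[OF adj_mp_inv_T, of "\<lambda>S. S x"] by (simp add: adj_compose)

lemma adj_mp_inv_adj_T_apply [simp]: "adj (mp_inv T) (adj T x) = T (mp_inv T x)"
  using arg_cong[OF adj_T_mp_inv, of "\<lambda>S. S x"] by (simp add: adj_compose)

lemma inner_mp_inv_T_commute: "inner (mp_inv T (T x)) y = inner x (mp_inv T (T y))"
  using adj_inner[of "mp_inv T o\<^sub>L T" x y] by (simp add: adj_mp_inv_T)

lemma inner_T_mp_inv_commute: "inner (T (mp_inv T x)) y = inner x (T (mp_inv T y))"
  using adj_inner[of "T o\<^sub>L mp_inv T" x y] by (simp add: adj_T_mp_inv)

lemma mp_inv_T_adj_T_apply [simp]: "mp_inv T (T (adj T x)) = adj T x"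
  by (rule vector_eq_rdot[THEN iffD1]) (simp add: inner_mp_inv_T_commute adj_inner_left)

lemma adj_mp_inv_mp_inv_T_apply [simp]: "adj (mp_inv T) (mp_inv T (T x)) = adj (mp_inv T) x"
  by (rule vector_eq_rdot[THEN iffD1]) (simp add: adj_inner_left inner_mp_inv_T_commute)

lemma T_mp_inv_adj_mp_inv_apply [simp]: "T (mp_inv T (adj (mp_inv T) x)) = adj (mp_inv T) x"
  by (rule vector_eq_rdot[THEN iffD1]) (simp add: adj_inner_left inner_T_mp_inv_commute)

lemma range_adj_eq_fixed_points: "range (adj T) = {y. mp_inv T (T y) = y}"
proof (intro set_eqI iffI)
  fix y assume "y \<in> range (adj T)"
  then show "y \<in> {y. mp_inv T (T y) = y}" by auto
next
  fix y assume "y \<in> {y. mp_inv T (T y) = y}"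
  then have "y = adj T (adj (mp_inv T) y)" by simp
  then show "y \<in> range (adj T)" by (rule range_eqI)
qed

lemma mp_inv_T_eq_if_orthogonal_to_kernel:
  assumes "\<And>w. T w = 0 \<Longrightarrow> inner y w = 0"
  shows "mp_inv T (T y) = y"
proof -
  define w where "w = y - mp_inv T (T y)"
  have "T w = 0" by (simp add: w_def blinfun.diff_right)
  then have "inner (mp_inv T (T y)) w = 0" by (simp add: inner_mp_inv_T_commute)
  then have "inner w w = 0" using assms[OF \<open>T w = 0\<close>] by (simp add: w_def inner_diff_left)
  then show ?thesis by (simp add: w_def)
qed

lemma mp_inv_adj_T_T: "mp_inv (adj T o\<^sub>L T) = mp_inv T o\<^sub>L adj (mp_inv T)"
proof (rule mp_inv_eqI)
  have "mp_inv T o\<^sub>L adj (mp_inv T) o\<^sub>L (adj T o\<^sub>L T) = mp_inv T o\<^sub>L T"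
    and "adj T o\<^sub>L T o\<^sub>L (mp_inv T o\<^sub>L adj (mp_inv T)) = mp_inv T o\<^sub>L T"
    by (auto intro: blinfun_eqI)
  then show "penrose (adj T o\<^sub>L T) (mp_inv T o\<^sub>L adj (mp_inv T))"
    unfolding penrose_def by (simp add: adj_mp_inv_T) (auto intro: blinfun_eqI)
qed

lemma cauchy_dual_eq: "cauchy_dual T = adj (mp_inv T)"
  by (rule blinfun_eqI) (simp add: cauchy_dual_def mp_inv_adj_T_T)

section \<open>Characterisations of n-hypo-EP operators\<close>

lemma op_pow_mp_inv_T:
  assumes "n \<ge> 1"
  shows "op_pow T n o\<^sub>L mp_inv T o\<^sub>L T = op_pow T n"
proof -
  obtain m where "n = Suc m" using assms by (cases n) auto
  then show ?thesis
    by (simp add: op_pow_Suc_right blinfun_compose_assoc T_mp_inv_T[unfolded blinfun_compose_assoc])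
qed

lemma op_pow_eq_mp_inv_comp_iff:
  "op_pow T n = mp_inv T o\<^sub>L op_pow T (n+1) \<longleftrightarrow> (\<forall>z. mp_inv T (T (op_pow T n z)) = op_pow T n z)"
proof
  assume eq: "op_pow T n = mp_inv T o\<^sub>L op_pow T (n+1)"
  show "\<forall>z. mp_inv T (T (op_pow T n z)) = op_pow T n z"
  proof
    fix z
    have "op_pow T n z = (mp_inv T o\<^sub>L op_pow T (n+1)) z" by (subst eq) (rule refl)
    then show "mp_inv T (T (op_pow T n z)) = op_pow T n z" by (simp add: op_pow_Suc)
  qed
qed (intro blinfun_eqI, simp add: op_pow_Suc)

lemma hypo_EP_iff: "hypo_EP n T \<longleftrightarrow> op_pow T n = mp_inv T o\<^sub>L op_pow T (n+1)"
  unfolding hypo_EP_def op_pow_eq_mp_inv_comp_iff range_adj_eq_fixed_points using closed_range_T by auto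

lemma op_pow_mp_inv_eq_iff:
  assumes "n \<ge> 1"
  shows "op_pow T n o\<^sub>L mp_inv T = mp_inv T o\<^sub>L op_pow T (n+1) o\<^sub>L mp_inv T
    \<longleftrightarrow> op_pow T n = mp_inv T o\<^sub>L op_pow T (n+1)"
proof
  assume "op_pow T n o\<^sub>L mp_inv T = mp_inv T o\<^sub>L op_pow T (n+1) o\<^sub>L mp_inv T"
  then have "op_pow T n o\<^sub>L mp_inv T o\<^sub>L T = mp_inv T o\<^sub>L (op_pow T (n+1) o\<^sub>L mp_inv T o\<^sub>L T)"
    by (simp add: blinfun_compose_assoc)
  then show "op_pow T n = mp_inv T o\<^sub>L op_pow T (n+1)"
    using assms by (simp add: op_pow_mp_inv_T)
qed simp

lemma adj_op_pow_eq_iff: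
  "op_pow (adj T) n = op_pow (adj T) n o\<^sub>L mp_inv T o\<^sub>L T \<longleftrightarrow> op_pow T n = mp_inv T o\<^sub>L op_pow T (n+1)"
proof -
  have "adj (mp_inv T o\<^sub>L op_pow T (n+1)) = op_pow (adj T) n o\<^sub>L adj (mp_inv T o\<^sub>L T)"
    by (simp add: op_pow_Suc adj_compose adj_op_pow blinfun_compose_assoc)
  also have "\<dots> = op_pow (adj T) n o\<^sub>L mp_inv T o\<^sub>L T"
    by (simp add: adj_mp_inv_T blinfun_compose_assoc)
  finally show ?thesis by (metis adj_eq_iff adj_op_pow)
qed

lemma kernel_subset_kernel_adj_op_pow_iff:
  "(\<forall>x. T x = 0 \<longrightarrow> op_pow (adj T) n x = 0) \<longleftrightarrow> op_pow T n = mp_inv T o\<^sub>L op_pow T (n+1)"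
proof
  assume kernel: "\<forall>x. T x = 0 \<longrightarrow> op_pow (adj T) n x = 0"
  have "mp_inv T (T (op_pow T n z)) = op_pow T n z" for z
  proof (rule mp_inv_T_eq_if_orthogonal_to_kernel)
    fix w assume "T w = 0"
    then show "inner (op_pow T n z) w = 0" using kernel by (simp add: adj_inner flip: adj_op_pow)
  qed
  then show "op_pow T n = mp_inv T o\<^sub>L op_pow T (n+1)" unfolding op_pow_eq_mp_inv_comp_iff by blast
next
  assume "op_pow T n = mp_inv T o\<^sub>L op_pow T (n+1)"
  then have "op_pow (adj T) n x = op_pow (adj T) n (mp_inv T (T x))" for x
    by (metis adj_op_pow_eq_iff blinfun_apply_blinfun_compose)
  then show "\<forall>x. T x = 0 \<longrightarrow> op_pow (adj T) n x = 0" by (metis blinfun.zero_right)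
qed

lemma adj_op_pow_bounded_by_T_iff:
  "(\<exists>c\<ge>0. \<forall>x. norm (op_pow (adj T) n x) \<le> c * norm (T x))
    \<longleftrightarrow> op_pow T n = mp_inv T o\<^sub>L op_pow T (n+1)"
proof
  assume "\<exists>c\<ge>0. \<forall>x. norm (op_pow (adj T) n x) \<le> c * norm (T x)"
  then obtain c where "\<And>x. norm (op_pow (adj T) n x) \<le> c * norm (T x)" by blast
  then have "\<forall>x. T x = 0 \<longrightarrow> op_pow (adj T) n x = 0" by (metis mult_zero_right norm_le_zero_iff norm_zero)
  then show "op_pow T n = mp_inv T o\<^sub>L op_pow T (n+1)" by (simp add: kernel_subset_kernel_adj_op_pow_iff)
next
  assume "op_pow T n = mp_inv T o\<^sub>L op_pow T (n+1)"
  then have "op_pow (adj T) n x = (op_pow (adj T) n o\<^sub>L mp_inv T) (T x)" for x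
    by (metis adj_op_pow_eq_iff blinfun_apply_blinfun_compose)
  then show "\<exists>c\<ge>0. \<forall>x. norm (op_pow (adj T) n x) \<le> c * norm (T x)"
    by (metis norm_blinfun norm_ge_zero)
qed

lemma adj_op_pow_bounded_by_cauchy_dual_iff:
  "(\<exists>c\<ge>0. \<forall>x. norm (op_pow (adj T) n x) \<le> c * norm (cauchy_dual T x))
    \<longleftrightarrow> op_pow T n = mp_inv T o\<^sub>L op_pow T (n+1)"
proof
  assume "\<exists>c\<ge>0. \<forall>x. norm (op_pow (adj T) n x) \<le> c * norm (cauchy_dual T x)"
  then obtain c where c: "\<And>x. norm (op_pow (adj T) n x) \<le> c * norm (cauchy_dual T x)" by blast
  have "cauchy_dual T x = 0" if "T x = 0" for x
    using adj_mp_inv_mp_inv_T_apply[of x] that by (simp add: cauchy_dual_eq)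
  then have "\<forall>x. T x = 0 \<longrightarrow> op_pow (adj T) n x = 0" by (metis c mult_zero_right norm_le_zero_iff norm_zero)
  then show "op_pow T n = mp_inv T o\<^sub>L op_pow T (n+1)" by (simp add: kernel_subset_kernel_adj_op_pow_iff)
next
  assume hypo: "op_pow T n = mp_inv T o\<^sub>L op_pow T (n+1)"
  have "op_pow (adj T) n x = (op_pow (adj T) n o\<^sub>L adj T) (cauchy_dual T x)" for x
  proof -
    have "op_pow (adj T) n x = op_pow (adj T) n (mp_inv T (T x))"
      using hypo by (metis adj_op_pow_eq_iff blinfun_apply_blinfun_compose)
    also have "mp_inv T (T x) = adj T (cauchy_dual T x)" by (simp add: cauchy_dual_eq)
    finally show ?thesis by simp
  qed
  then show "\<exists>c\<ge>0. \<forall>x. norm (op_pow (adj T) n x) \<le> c * norm (cauchy_dual T x)"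
    by (metis norm_blinfun norm_ge_zero)
qed

end

theorem mainTheorem13:
  fixes T :: "'a::{real_inner,complete_space} \<Rightarrow>\<^sub>L 'a" and n :: nat
  assumes "closed_range T" and "n \<ge> 1"
  shows "(hypo_EP n T \<longleftrightarrow> op_pow T n = mp_inv T o\<^sub>L op_pow T (n+1))
       \<and> (hypo_EP n T \<longleftrightarrow> op_pow T n o\<^sub>L mp_inv T = mp_inv T o\<^sub>L op_pow T (n+1) o\<^sub>L mp_inv T)
       \<and> (hypo_EP n T \<longleftrightarrow> op_pow (adj T) n = op_pow (adj T) n o\<^sub>L mp_inv T o\<^sub>L T)
       \<and> (hypo_EP n T \<longleftrightarrow> (\<exists>c\<ge>0. \<forall>x. norm (op_pow (adj T) n x) \<le> c * norm (T x)))
       \<and> (hypo_EP n T \<longleftrightarrow> (\<exists>c\<ge>0. \<forall>x. norm (op_pow (adj T) n x) \<le> c * norm (cauchy_dual T x)))"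
proof -
  interpret closed_range_operator T by standard (rule assms(1))
  show ?thesis
    unfolding hypo_EP_iff op_pow_mp_inv_eq_iff[OF assms(2)] adj_op_pow_eq_iff
      adj_op_pow_bounded_by_T_iff adj_op_pow_bounded_by_cauchy_dual_iff
    by simp
qed

end
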